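(* Assume $(g,\mathfrak{D})$ satisfy B1–B3 with constant $\kappa>0$. Then for every $X\in\mathbb{R}^{m\times n}$ and every $D\in\mathfrak{D}$, with the norm $\|\cdot\|=\|\cdot\|_{1\to2}$, $$L_X(D)\le\frac{2}{n\sqrt\kappa}\|X\|_F^2,\qquad C_X(D)\le\frac{2}{n\kappa}\|X\|_F^2.$$
   Context: $\mathfrak{D}\subset\mathbb{R}^{m\times d}$. B1: $g=\chi_{\mathcal K}$ is the indicator of a set $\mathcal K\subset\mathbb{R}^d$ ($0$ on $\mathcal K$, $+\infty$ outside); B2: $\kappa\|\alpha\|_1^2\le\|D\alpha\|_2^2$ for all $\alpha\in\mathcal K$, $D\in\mathfrak{D}$; B3: $0\in\mathcal K$. $\mathcal{L}_x(D,\alpha)=\tfrac12\|x-D\alpha\|_2^2+g(\alpha)$, $f_x(D)=\inf_\alpha\mathcal{L}_x(D,\alpha)$. $\|\Delta\|_{1\to2}=\max_j\|\delta_j\|_2$ with dual norm $\|\cdot\|_\star$ w.r.t. the Frobenius inner product. For $X=[x_1,\dots,x_n]$ and $\epsilon>0$, $\mathfrak{A}_\epsilon(X,D)=\{A=[\alpha_1,\dots,\alpha_n]:\ \mathcal{L}_{x_i}(D,\alpha_i)\le f_{x_i}(D)+\epsilon\ \forall i\}$; $L_X(D)=\inf_{\epsilon>0}\sup_{A\in\mathfrak{A}_\epsilon(X,D)}\frac1n\|(X-DA)A^\top\|_\star$, $C_X(D)=\inf_{\epsilon>0}\sup_{A\in\mathfrak{A}_\epsilon(X,D)}\frac1{2n}\sum_i\|\alpha_i\|_1^2$.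 *)

theory Defs
  imports "HOL-Analysis.Analysis"
begin

text \<open>Matrices in R^{m x d} are rendered as real^'d^'m (rows indexed by 'm, columns by 'd);
  columns are obtained with column.  Extended-real values are used for g, L, f, sup, inf.\<close>

definition chi :: "(real^'d) set \<Rightarrow> real^'d \<Rightarrow> ereal" where
  "chi K \<alpha> = (if \<alpha> \<in> K then 0 else \<infinity>)"

definition l1norm :: "real^'d \<Rightarrow> real" where
  "l1norm \<alpha> = (\<Sum>j\<in>UNIV. \<bar>\<alpha> $ j\<bar>)"

definition norm12 :: "real^'d^'m \<Rightarrow> real" where
  "norm12 M = Max (range (\<lambda>j. norm (column j M)))"

definition frob_inner :: "real^'d^'m \<Rightarrow> real^'d^'m \<Rightarrow> real" where
  "frob_inner M N = (\<Sum>i\<in>UNIV. \<Sum>j\<in>UNIV. M $ i $ j * N $ i $ j)"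

definition dual12 :: "real^'d^'m \<Rightarrow> real" where
  "dual12 M = Sup {frob_inner M \<Delta> | \<Delta>. norm12 \<Delta> \<le> 1}"

definition frob_sq :: "real^'n^'m \<Rightarrow> real" where
  "frob_sq X = (\<Sum>i\<in>UNIV. \<Sum>j\<in>UNIV. (X $ i $ j)^2)"

definition LL :: "(real^'d \<Rightarrow> ereal) \<Rightarrow> real^'m \<Rightarrow> real^'d^'m \<Rightarrow> real^'d \<Rightarrow> ereal" where
  "LL g x D \<alpha> = ereal (1/2 * (norm (x - D *v \<alpha>))^2) + g \<alpha>"

definition ff :: "(real^'d \<Rightarrow> ereal) \<Rightarrow> real^'m \<Rightarrow> real^'d^'m \<Rightarrow> ereal" where
  "ff g x D = (INF \<alpha>. LL g x D \<alpha>)"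

definition Aeps :: "(real^'d \<Rightarrow> ereal) \<Rightarrow> real \<Rightarrow> real^'n^'m \<Rightarrow> real^'d^'m \<Rightarrow> (real^'n^'d) set" where
  "Aeps g eps X D = {A. \<forall>i. LL g (column i X) D (column i A) \<le> ff g (column i X) D + ereal eps}"

definition LX :: "(real^'d \<Rightarrow> ereal) \<Rightarrow> real^'n^'m \<Rightarrow> real^'d^'m \<Rightarrow> ereal" where
  "LX g X D = (INF eps\<in>{0<..}. SUP A\<in>Aeps g eps X D.
      ereal (dual12 ((X - D ** A) ** transpose A) / real CARD('n)))"

definition CX :: "(real^'d \<Rightarrow> ereal) \<Rightarrow> real^'n^'m \<Rightarrow> real^'d^'m \<Rightarrow> ereal" where
  "CX g X D = (INF eps\<in>{0<..}. SUP A\<in>Aeps g eps X D.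
      ereal (1 / (2 * real CARD('n)) * (\<Sum>i\<in>UNIV. (l1norm (column i A))^2)))"

end

theory Submission
  imports Defs
begin

text \<open>An \<open>\<epsilon>\<close>-minimiser \<open>\<alpha>\<close> of \<open>1/2 \<parallel>x - D\<alpha>\<parallel>\<^sup>2\<close> over \<open>K\<close> does at most \<open>\<epsilon>\<close> worse than
  the feasible point \<open>0\<close>, so \<open>\<parallel>x - D\<alpha>\<parallel>\<^sup>2 \<le> \<parallel>x\<parallel>\<^sup>2 + 2\<epsilon>\<close>; by the triangle inequality
  \<open>\<parallel>D\<alpha>\<parallel>\<^sup>2 \<le> 4(\<parallel>x\<parallel>\<^sup>2 + 2\<epsilon>)\<close>, which B2 turns into \<open>\<kappa>\<parallel>\<alpha>\<parallel>\<^sub>1\<^sup>2 \<le> 4(\<parallel>x\<parallel>\<^sup>2 + 2\<epsilon>)\<close>.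
  The dual \<open>1\<rightarrow>2\<close> norm of \<open>(X - DA)A\<^sup>T\<close> is at most \<open>\<Sum>\<^sub>i \<parallel>x\<^sub>i - D\<alpha>\<^sub>i\<parallel> \<parallel>\<alpha>\<^sub>i\<parallel>\<^sub>1\<close>, so summing
  the column bounds and letting \<open>\<epsilon> \<rightarrow> 0\<close> gives both estimates.\<close>

lemma near_minimizer_chi:
  fixes x :: "real^'m" and D :: "real^'d^'m"
  assumes "0 \<in> K" and "LL (chi K) x D \<alpha> \<le> ff (chi K) x D + ereal eps"
  shows "\<alpha> \<in> K" and "norm (x - D *v \<alpha>)^2 \<le> norm x^2 + 2*eps"
proof -
  have "ff (chi K) x D \<le> LL (chi K) x D 0" unfolding ff_def by (rule INF_lower) simp
  also have "\<dots> = ereal (1/2 * norm x^2)" using assms(1) by (simp add: LL_def chi_def)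
  finally have bound: "LL (chi K) x D \<alpha> \<le> ereal (1/2 * norm x^2 + eps)"
    using assms(2) by (metis add_right_mono order.trans plus_ereal.simps(1))
  show "\<alpha> \<in> K"
  proof (rule ccontr)
    assume "\<alpha> \<notin> K"
    then have "LL (chi K) x D \<alpha> = \<infinity>" by (simp add: LL_def chi_def)
    with bound show False by simp
  qed
  then show "norm (x - D *v \<alpha>)^2 \<le> norm x^2 + 2*eps"
    using bound by (simp add: LL_def chi_def)
qed

lemma near_minimizer_l1norm_sq_le:
  fixes x :: "real^'m" and D :: "real^'d^'m"
  assumes "0 \<in> K" and "eps \<ge> 0"
    and B2: "\<And>\<alpha>. \<alpha> \<in> K \<Longrightarrow> \<kappa> * (l1norm \<alpha>)^2 \<le> (norm (D *v \<alpha>))^2"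
    and near: "LL (chi K) x D \<alpha> \<le> ff (chi K) x D + ereal eps"
  shows "\<kappa> * (l1norm \<alpha>)^2 \<le> 4 * (norm x^2 + 2*eps)"
proof -
  define a where "a = norm x"
  define b where "b = norm (x - D *v \<alpha>)"
  have b_sq: "b^2 \<le> a^2 + 2*eps"
    using near_minimizer_chi(2)[OF assms(1) near] by (simp add: a_def b_def)
  have "norm (D *v \<alpha>) \<le> a + b"
    unfolding a_def b_def using norm_triangle_ineq4[of x "x - D *v \<alpha>"] by simp
  then have "norm (D *v \<alpha>)^2 \<le> (a + b)^2" by (simp add: power_mono)
  also have "\<dots> \<le> 2*a^2 + 2*b^2"
    using sum_squares_ge_zero[of "a - b" 0] by (simp add: power2_eq_square algebra_simps)
  also have "\<dots> \<le> 4 * (a^2 + 2*eps)" using b_sq \<open>eps \<ge> 0\<close> by simp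
  finally show ?thesis
    using B2[OF near_minimizer_chi(1)[OF assms(1) near]] unfolding a_def by linarith
qed

lemma near_minimizer_residual_mult_l1norm_le:
  fixes x :: "real^'m" and D :: "real^'d^'m"
  assumes "\<kappa> > 0" and "0 \<in> K" and "eps \<ge> 0"
    and B2: "\<And>\<alpha>. \<alpha> \<in> K \<Longrightarrow> \<kappa> * (l1norm \<alpha>)^2 \<le> (norm (D *v \<alpha>))^2"
    and near: "LL (chi K) x D \<alpha> \<le> ff (chi K) x D + ereal eps"
  shows "norm (x - D *v \<alpha>) * l1norm \<alpha> \<le> 2 * (norm x^2 + 2*eps) / sqrt \<kappa>"
proof -
  define s where "s = norm x^2 + 2*eps"
  have s_nonneg: "s \<ge> 0" using \<open>eps \<ge> 0\<close> by (simp add: s_def)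
  have residual_sq: "norm (x - D *v \<alpha>)^2 \<le> s"
    using near_minimizer_chi(2)[OF assms(2) near] by (simp add: s_def)
  have "\<kappa> * (l1norm \<alpha>)^2 \<le> 4 * s"
    using near_minimizer_l1norm_sq_le[OF assms(2-5)] by (simp add: s_def)
  then have l1_sq: "(l1norm \<alpha>)^2 \<le> 4 * s / \<kappa>"
    using \<open>\<kappa> > 0\<close> by (simp add: pos_le_divide_eq mult.commute)
  have "(norm (x - D *v \<alpha>) * l1norm \<alpha>)^2 = norm (x - D *v \<alpha>)^2 * (l1norm \<alpha>)^2"
    by (simp add: power_mult_distrib)
  also have "\<dots> \<le> s * (4 * s / \<kappa>)"
    using residual_sq l1_sq s_nonneg by (intro mult_mono) simp_all
  also have "\<dots> = (2 * s / sqrt \<kappa>)^2"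
    using \<open>\<kappa> > 0\<close> by (simp add: power_divide power_mult_distrib power2_eq_square)
  finally have "(norm (x - D *v \<alpha>) * l1norm \<alpha>)^2 \<le> (2 * s / sqrt \<kappa>)^2" .
  moreover have "2 * s / sqrt \<kappa> \<ge> 0" using s_nonneg \<open>\<kappa> > 0\<close> by simp
  ultimately show ?thesis unfolding s_def[symmetric] by (rule power2_le_imp_le)
qed

lemma frob_sq_eq_sum_column_norms:
  "frob_sq (X::real^'n^'m) = (\<Sum>i\<in>UNIV. norm (column i X)^2)"
  unfolding frob_sq_def power2_norm_eq_inner column_def inner_vec_def
  by (simp add: power2_eq_square sum.swap[of _ "UNIV::'m set"])

lemma column_diff_matrix_mult:
  "column k (X - D ** A) = column k X - D *v column k (A::real^'n^'d)"
  by (simp add: column_def matrix_matrix_mult_def matrix_vector_mult_def vec_eq_iff)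

lemma frob_inner_mult_transpose:
  "frob_inner ((R::real^'n^'m) ** transpose (A::real^'n^'d)) \<Delta>
     = (\<Sum>k\<in>UNIV. inner (column k R) (\<Delta> *v column k A))"
  unfolding frob_inner_def matrix_matrix_mult_def transpose_def matrix_vector_mult_def
    inner_vec_def column_def
  by (simp add: sum_distrib_left sum_distrib_right algebra_simps)
    (rule trans[OF sum.cong[OF refl sum.swap] sum.swap])

lemma norm_column_le_norm12: "norm (column j (M::real^'d^'m)) \<le> norm12 M"
  unfolding norm12_def by (rule Max_ge) auto

lemma norm_matrix_vector_mult_le_l1norm:
  assumes "norm12 (\<Delta>::real^'d^'m) \<le> 1"
  shows "norm (\<Delta> *v \<alpha>) \<le> l1norm \<alpha>"
proof -
  have "norm (\<Delta> *v \<alpha>) = norm (\<Sum>j\<in>UNIV. (\<alpha>$j) *s column j \<Delta>)" by (simp add: matrix_mult_sum)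
  also have "\<dots> \<le> (\<Sum>j\<in>UNIV. norm ((\<alpha>$j) *s column j \<Delta>))" by (rule norm_sum)
  also have "\<dots> \<le> (\<Sum>j\<in>UNIV. \<bar>\<alpha>$j\<bar>)"
  proof (rule sum_mono)
    fix j
    have "norm (column j \<Delta>) \<le> 1" using norm_column_le_norm12[of j \<Delta>] assms by linarith
    then show "norm ((\<alpha>$j) *s column j \<Delta>) \<le> \<bar>\<alpha>$j\<bar>"
      by (simp add: scalar_mult_eq_scaleR mult_left_le)
  qed
  finally show ?thesis unfolding l1norm_def .
qed

lemma dual12_mult_transpose_le:
  fixes R :: "real^'n^'m" and A :: "real^'n^'d"
  shows "dual12 (R ** transpose A) \<le> (\<Sum>k\<in>UNIV. norm (column k R) * l1norm (column k A))"
  unfolding dual12_def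
proof (rule cSup_least)
  have "column j (0::real^'d^'m) = 0" for j by (simp add: column_def vec_eq_iff)
  then have "norm12 (0::real^'d^'m) \<le> 1" by (simp add: norm12_def)
  then show "{frob_inner (R ** transpose A) \<Delta> | \<Delta>. norm12 \<Delta> \<le> 1} \<noteq> {}" by blast
next
  fix v assume "v \<in> {frob_inner (R ** transpose A) \<Delta> | \<Delta>. norm12 \<Delta> \<le> 1}"
  then obtain \<Delta> where v: "v = frob_inner (R ** transpose A) \<Delta>" and \<Delta>: "norm12 \<Delta> \<le> 1" by auto
  have "v = (\<Sum>k\<in>UNIV. inner (column k R) (\<Delta> *v column k A))"
    using v frob_inner_mult_transpose by simp
  also have "\<dots> \<le> (\<Sum>k\<in>UNIV. norm (column k R) * l1norm (column k A))"
  proof (rule sum_mono)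
    fix k
    have "inner (column k R) (\<Delta> *v column k A) \<le> norm (column k R) * norm (\<Delta> *v column k A)"
      by (rule norm_cauchy_schwarz)
    also have "\<dots> \<le> norm (column k R) * l1norm (column k A)"
      by (rule mult_left_mono[OF norm_matrix_vector_mult_le_l1norm[OF \<Delta>]]) simp
    finally show "inner (column k R) (\<Delta> *v column k A) \<le> norm (column k R) * l1norm (column k A)" .
  qed
  finally show "v \<le> (\<Sum>k\<in>UNIV. norm (column k R) * l1norm (column k A))" .
qed

lemma INF_SUP_le_of_affine_bound:
  fixes F :: "'a \<Rightarrow> real" and S :: "real \<Rightarrow> 'a set"
  assumes bound: "\<And>eps a. eps > 0 \<Longrightarrow> a \<in> S eps \<Longrightarrow> F a \<le> c + k*eps" and "k \<ge> 0"
  shows "(INF eps\<in>{0<..}. SUP a\<in>S eps. ereal (F a)) \<le> ereal c"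
proof (rule ereal_le_epsilon2)
  fix e :: real assume "e > 0"
  define eps where "eps = e / (k + 1)"
  have "eps > 0" and "k * eps \<le> e"
    using \<open>e > 0\<close> \<open>k \<ge> 0\<close> by (simp_all add: eps_def field_simps)
  have "(INF eps\<in>{0<..}. SUP a\<in>S eps. ereal (F a)) \<le> (SUP a\<in>S eps. ereal (F a))"
    using \<open>eps > 0\<close> by (intro INF_lower) simp
  also have "\<dots> \<le> ereal (c + k*eps)"
    using bound[OF \<open>eps > 0\<close>] by (intro SUP_least) simp
  also have "\<dots> \<le> ereal c + ereal e" using \<open>k * eps \<le> e\<close> by simp
  finally show "(INF eps\<in>{0<..}. SUP a\<in>S eps. ereal (F a)) \<le> ereal c + ereal e" .
qed

lemma sum_column_norms_sq_add:
  "(\<Sum>i\<in>UNIV. norm (column i (X::real^'n^'m))^2 + 2*eps) = frob_sq X + 2 * real CARD('n) * eps"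
  by (simp add: sum.distrib frob_sq_eq_sum_column_norms)

lemma Aeps_column_near_minimizer:
  "A \<in> Aeps g eps X D \<Longrightarrow> LL g (column i X) D (column i A) \<le> ff g (column i X) D + ereal eps"
  by (simp add: Aeps_def)

lemma Aeps_sum_l1norm_sq_le:
  fixes X :: "real^'n^'m" and D :: "real^'d^'m"
  assumes "\<kappa> > 0" and "0 \<in> K" and "eps \<ge> 0"
    and B2: "\<And>\<alpha>. \<alpha> \<in> K \<Longrightarrow> \<kappa> * (l1norm \<alpha>)^2 \<le> (norm (D *v \<alpha>))^2"
    and A: "A \<in> Aeps (chi K) eps X D"
  shows "(\<Sum>i\<in>UNIV. (l1norm (column i A))^2) \<le> 4 / \<kappa> * (frob_sq X + 2 * real CARD('n) * eps)"
proof -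
  have "(\<Sum>i\<in>UNIV. (l1norm (column i A))^2) \<le> (\<Sum>i\<in>UNIV. 4 / \<kappa> * (norm (column i X)^2 + 2*eps))"
  proof (rule sum_mono)
    fix i
    have "\<kappa> * (l1norm (column i A))^2 \<le> 4 * (norm (column i X)^2 + 2*eps)"
      by (rule near_minimizer_l1norm_sq_le[OF assms(2-4) Aeps_column_near_minimizer[OF A]])
    then show "(l1norm (column i A))^2 \<le> 4 / \<kappa> * (norm (column i X)^2 + 2*eps)"
      using \<open>\<kappa> > 0\<close> by (simp add: field_simps)
  qed
  then show ?thesis by (simp only: sum_distrib_left[symmetric] sum_column_norms_sq_add)
qed

lemma Aeps_dual12_le:
  fixes X :: "real^'n^'m" and D :: "real^'d^'m"
  assumes "\<kappa> > 0" and "0 \<in> K" and "eps \<ge> 0"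
    and B2: "\<And>\<alpha>. \<alpha> \<in> K \<Longrightarrow> \<kappa> * (l1norm \<alpha>)^2 \<le> (norm (D *v \<alpha>))^2"
    and A: "A \<in> Aeps (chi K) eps X D"
  shows "dual12 ((X - D ** A) ** transpose A)
           \<le> 2 / sqrt \<kappa> * (frob_sq X + 2 * real CARD('n) * eps)"
proof -
  have "dual12 ((X - D ** A) ** transpose A)
          \<le> (\<Sum>i\<in>UNIV. norm (column i X - D *v column i A) * l1norm (column i A))"
    using dual12_mult_transpose_le[of "X - D ** A" A] by (simp only: column_diff_matrix_mult)
  also have "\<dots> \<le> (\<Sum>i\<in>UNIV. 2 / sqrt \<kappa> * (norm (column i X)^2 + 2*eps))"
  proof (rule sum_mono)
    fix i
    have "norm (column i X - D *v column i A) * l1norm (column i A)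
            \<le> 2 * (norm (column i X)^2 + 2*eps) / sqrt \<kappa>"
      by (rule near_minimizer_residual_mult_l1norm_le[OF assms(1-4) Aeps_column_near_minimizer[OF A]])
    then show "norm (column i X - D *v column i A) * l1norm (column i A)
            \<le> 2 / sqrt \<kappa> * (norm (column i X)^2 + 2*eps)"
      by simp
  qed
  finally show ?thesis by (simp only: sum_distrib_left[symmetric] sum_column_norms_sq_add)
qed

theorem mainTheorem8:
  fixes g :: "real^'d \<Rightarrow> ereal" and K :: "(real^'d) set"
    and DD :: "(real^'d^'m) set" and \<kappa> :: real
    and X :: "real^'n^'m" and D :: "real^'d^'m"
  assumes kpos: "\<kappa> > 0"
    and B1: "g = chi K"
    and B2: "\<And>\<alpha> D'. \<alpha> \<in> K \<Longrightarrow> D' \<in> DD \<Longrightarrow> \<kappa> * (l1norm \<alpha>)^2 \<le> (norm (D' *v \<alpha>))^2"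
    and B3: "0 \<in> K"
    and D: "D \<in> DD"
  shows "LX g X D \<le> ereal (2 / (real CARD('n) * sqrt \<kappa>) * frob_sq X)
       \<and> CX g X D \<le> ereal (2 / (real CARD('n) * \<kappa>) * frob_sq X)"
proof
  define n where "n = real CARD('n)"
  have "n > 0" by (simp add: n_def)
  note B2_D = B2[OF _ D]
  show "LX g X D \<le> ereal (2 / (n * sqrt \<kappa>) * frob_sq X)"
    unfolding LX_def B1 n_def[symmetric]
  proof (rule INF_SUP_le_of_affine_bound[where k = "4 / sqrt \<kappa>"])
    fix eps A assume "eps > 0" and A: "A \<in> Aeps (chi K) eps X D"
    then have "dual12 ((X - D ** A) ** transpose A) \<le> 2 / sqrt \<kappa> * (frob_sq X + 2 * n * eps)"
      unfolding n_def using Aeps_dual12_le[OF kpos B3 _ B2_D A] by simp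
    then show "dual12 ((X - D ** A) ** transpose A) / n \<le> 2 / (n * sqrt \<kappa>) * frob_sq X + 4 / sqrt \<kappa> * eps"
      using \<open>n > 0\<close> kpos by (simp add: field_simps)
  qed (use kpos in simp)
  show "CX g X D \<le> ereal (2 / (n * \<kappa>) * frob_sq X)"
    unfolding CX_def B1 n_def[symmetric]
  proof (rule INF_SUP_le_of_affine_bound[where k = "4 / \<kappa>"])
    fix eps A assume "eps > 0" and A: "A \<in> Aeps (chi K) eps X D"
    then have "(\<Sum>i\<in>UNIV. (l1norm (column i A))^2) \<le> 4 / \<kappa> * (frob_sq X + 2 * n * eps)"
      unfolding n_def using Aeps_sum_l1norm_sq_le[OF kpos B3 _ B2_D A] by simp
    then show "1 / (2 * n) * (\<Sum>i\<in>UNIV. (l1norm (column i A))^2) \<le> 2 / (n * \<kappa>) * frob_sq X + 4 / \<kappa> * eps"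
      using \<open>n > 0\<close> kpos by (simp add: field_simps)
  qed (use kpos in simp)
qed

end
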